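(* Let $h\geq2$ and let $V\leq S_h$ be $2$-representable, i.e. $V=S(f)$ for some Boolean function $f:\{0,1\}^h\to\{0,1\}$. Then for every $n\geq2$, in $G=S_h\times S_n$ one has $O(V\times\{id\})=V\times\{id\}$.
   Context: For $\varphi\in S_h$ and $x\in\{0,1\}^h$, $x^\varphi=(x_{\varphi^{-1}(1)},\dots,x_{\varphi^{-1}(h)})$; the invariance group of $f:\{0,1\}^h\to\{0,1\}$ is $S(f)=\{\varphi\in S_h: f(x^\varphi)=f(x)\ \forall x\}$. Permutations compose as $(\sigma\tau)(x)=\sigma(\tau(x))$. Let $\mathcal{P}=(S_n)^h$ with $G=S_h\times S_n$ acting by $(p^{(\varphi,\psi)})_i=\psi\,p_{\varphi^{-1}(i)}$, and $p^U=\{p^g:g\in U\}$. $U\leq G$ is regular if for every $p$, $\{g\in U:p^g=p\}\subseteq S_h\times\{id\}$ (every subgroup of $S_h\times\{id\}$ is regular). For regular $U$, $\mathcal{A}(U)$ is the set of regular $W\leq G$ with $W\geq U$ and $p^W\subseteq p^U$ for all $p\in\mathcal{P}$, and $O(U)=\langle\mathcal{A}(U)\rangle$. *)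

theory Defs
  imports "HOL-Algebra.Sym_Groups" "HOL-Algebra.Generated_Groups"
begin

definition perm_vec :: "nat \<Rightarrow> (nat \<Rightarrow> nat) \<Rightarrow> (nat \<Rightarrow> bool) \<Rightarrow> (nat \<Rightarrow> bool)" where
  "perm_vec h \<phi> x = (\<lambda>i\<in>{1..h}. x (Hilbert_Choice.inv \<phi> i))"

definition invariance_group :: "nat \<Rightarrow> ((nat \<Rightarrow> bool) \<Rightarrow> bool) \<Rightarrow> (nat \<Rightarrow> nat) set" where
  "invariance_group h f = {\<phi> \<in> carrier (sym_group h).
     \<forall>x \<in> {1..h} \<rightarrow>\<^sub>E (UNIV :: bool set). f (perm_vec h \<phi> x) = f x}"

definition bigG :: "nat \<Rightarrow> nat \<Rightarrow> ((nat \<Rightarrow> nat) \<times> (nat \<Rightarrow> nat)) monoid" where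
  "bigG h n = sym_group h \<times>\<times> sym_group n"

definition tuples :: "nat \<Rightarrow> nat \<Rightarrow> (nat \<Rightarrow> (nat \<Rightarrow> nat)) set" where
  "tuples h n = {1..h} \<rightarrow>\<^sub>E carrier (sym_group n)"

definition act :: "nat \<Rightarrow> (nat \<Rightarrow> (nat \<Rightarrow> nat)) \<Rightarrow> (nat \<Rightarrow> nat) \<times> (nat \<Rightarrow> nat) \<Rightarrow> (nat \<Rightarrow> (nat \<Rightarrow> nat))" where
  "act h p g = (\<lambda>i\<in>{1..h}. snd g \<circ> p (Hilbert_Choice.inv (fst g) i))"

definition orbit_under :: "nat \<Rightarrow> ((nat \<Rightarrow> nat) \<times> (nat \<Rightarrow> nat)) set \<Rightarrow> (nat \<Rightarrow> (nat \<Rightarrow> nat)) \<Rightarrow> (nat \<Rightarrow> (nat \<Rightarrow> nat)) set" where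
  "orbit_under h U p = (act h p) ` U"

definition regular :: "nat \<Rightarrow> nat \<Rightarrow> ((nat \<Rightarrow> nat) \<times> (nat \<Rightarrow> nat)) set \<Rightarrow> bool" where
  "regular h n U \<longleftrightarrow> (\<forall>p \<in> tuples h n. \<forall>g \<in> U. act h p g = p \<longrightarrow> snd g = id)"

definition calA :: "nat \<Rightarrow> nat \<Rightarrow> ((nat \<Rightarrow> nat) \<times> (nat \<Rightarrow> nat)) set \<Rightarrow> ((nat \<Rightarrow> nat) \<times> (nat \<Rightarrow> nat)) set set" where
  "calA h n U = {W. subgroup W (bigG h n) \<and> regular h n W \<and> U \<subseteq> W \<and>
     (\<forall>p \<in> tuples h n. orbit_under h W p \<subseteq> orbit_under h U p)}"

definition calO :: "nat \<Rightarrow> nat \<Rightarrow> ((nat \<Rightarrow> nat) \<times> (nat \<Rightarrow> nat)) set \<Rightarrow> ((nat \<Rightarrow> nat) \<times> (nat \<Rightarrow> nat)) set" where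
  "calO h n U = generate (bigG h n) (\<Union> (calA h n U))"

end

theory Submission
  imports Defs
begin

text \<open>Since \<open>V \<times> {id}\<close> belongs to \<open>\<A>(V \<times> {id})\<close>, it suffices to show that every
  \<open>W \<in> \<A>(V \<times> {id})\<close> lies inside \<open>V \<times> {id}\<close>. Comparing orbits of the constant tuple
  \<open>(id, \<dots>, id)\<close> forces the \<open>S\<^sub>n\<close>-component of each \<open>(\<phi>, \<psi>) \<in> W\<close> to be trivial. A Boolean
  vector \<open>x\<close> is encoded as the tuple whose \<open>i\<close>-th entry is a transposition \<open>t\<close> if \<open>x\<^sub>i\<close>
  holds and \<open>id\<close> otherwise; comparing orbits of these tuples shows that \<open>\<phi>\<close> moves every
  \<open>x\<close> exactly as some element of \<open>V = S(f)\<close> does, hence \<open>f (x\<^sup>\<phi>) = f x\<close>.\<close>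

lemma perm_vec_in_PiE: "perm_vec h \<phi> x \<in> {1..h} \<rightarrow>\<^sub>E (UNIV :: bool set)"
  unfolding perm_vec_def by auto

lemma perm_vec_id:
  assumes "x \<in> {1..h} \<rightarrow>\<^sub>E (UNIV :: bool set)"
  shows "perm_vec h id x = x"
  using assms unfolding perm_vec_def inv_id by (simp add: PiE_restrict)

lemma perm_vec_comp:
  assumes "\<phi> permutes {1..h}" "\<sigma> permutes {1..h}"
  shows "perm_vec h (\<phi> \<circ> \<sigma>) x = perm_vec h \<phi> (perm_vec h \<sigma> x)"
proof -
  have "inv' (\<phi> \<circ> \<sigma>) = inv' \<sigma> \<circ> inv' \<phi>"
    using assms by (simp add: o_inv_distrib permutes_bij)
  moreover have "inv' \<phi> i \<in> {1..h}" if "i \<in> {1..h}" for i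
    using that permutes_in_image[OF permutes_inv[OF assms(1)]] by simp
  ultimately show ?thesis unfolding perm_vec_def by (auto intro!: ext)
qed

lemma perm_vec_inv:
  assumes "\<phi> permutes {1..h}" "x \<in> {1..h} \<rightarrow>\<^sub>E (UNIV :: bool set)"
  shows "perm_vec h \<phi> (perm_vec h (inv' \<phi>) x) = x"
  using perm_vec_comp[OF assms(1) permutes_inv[OF assms(1)], symmetric]
  by (simp add: permutes_inv_o(1)[OF assms(1)] perm_vec_id[OF assms(2)])

lemma invariance_group_permutes: "\<phi> \<in> invariance_group h f \<Longrightarrow> \<phi> permutes {1..h}"
  unfolding invariance_group_def sym_group_carrier by auto

lemma subgroup_invariance_group: "subgroup (invariance_group h f) (sym_group h)"
proof (rule group.subgroupI[OF sym_group_is_group])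
  show "invariance_group h f \<subseteq> carrier (sym_group h)"
    unfolding invariance_group_def by auto
  have "id \<in> invariance_group h f"
    unfolding invariance_group_def by (auto simp: sym_group_carrier permutes_id perm_vec_id)
  then show "invariance_group h f \<noteq> {}" by blast
next
  fix \<phi> assume \<phi>: "\<phi> \<in> invariance_group h f"
  then have \<phi>p: "\<phi> permutes {1..h}" by (rule invariance_group_permutes)
  have "f (perm_vec h (inv' \<phi>) x) = f x" if "x \<in> {1..h} \<rightarrow>\<^sub>E UNIV" for x
  proof -
    have "f (perm_vec h \<phi> (perm_vec h (inv' \<phi>) x)) = f (perm_vec h (inv' \<phi>) x)"
      using \<phi> perm_vec_in_PiE unfolding invariance_group_def by blast
    then show ?thesis by (simp add: perm_vec_inv[OF \<phi>p that])
  qed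
  then have "inv' \<phi> \<in> invariance_group h f"
    unfolding invariance_group_def sym_group_carrier using permutes_inv[OF \<phi>p] by blast
  then show "inv\<^bsub>sym_group h\<^esub> \<phi> \<in> invariance_group h f"
    using \<phi>p by (simp add: sym_group_carrier)
next
  fix \<phi> \<sigma> assume \<phi>: "\<phi> \<in> invariance_group h f" and \<sigma>: "\<sigma> \<in> invariance_group h f"
  have "f (perm_vec h (\<phi> \<circ> \<sigma>) x) = f x" if "x \<in> {1..h} \<rightarrow>\<^sub>E UNIV" for x
  proof -
    have "f (perm_vec h \<phi> (perm_vec h \<sigma> x)) = f (perm_vec h \<sigma> x)"
      using \<phi> perm_vec_in_PiE unfolding invariance_group_def by blast
    also have "\<dots> = f x"
      using \<sigma> that unfolding invariance_group_def by blast
    finally show ?thesis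
      using perm_vec_comp[OF invariance_group_permutes[OF \<phi>] invariance_group_permutes[OF \<sigma>]]
      by simp
  qed
  then show "\<phi> \<otimes>\<^bsub>sym_group h\<^esub> \<sigma> \<in> invariance_group h f"
    using \<phi> \<sigma> unfolding invariance_group_def
    by (simp add: sym_group_mult sym_group_carrier permutes_compose)
qed

lemma invariance_group_memI:
  assumes "\<phi> permutes {1..h}"
    and "\<And>x. x \<in> {1..h} \<rightarrow>\<^sub>E UNIV \<Longrightarrow> \<exists>\<sigma>\<in>invariance_group h f. perm_vec h \<phi> x = perm_vec h \<sigma> x"
  shows "\<phi> \<in> invariance_group h f"
proof -
  have "f (perm_vec h \<phi> x) = f x" if x: "x \<in> {1..h} \<rightarrow>\<^sub>E UNIV" for x
  proof -
    obtain \<sigma> where "\<sigma> \<in> invariance_group h f" "perm_vec h \<phi> x = perm_vec h \<sigma> x"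
      using assms(2)[OF x] by blast
    then show ?thesis using x unfolding invariance_group_def by simp
  qed
  then show ?thesis using assms(1) unfolding invariance_group_def sym_group_carrier by blast
qed

definition indicator_tuple :: "nat \<Rightarrow> (nat \<Rightarrow> nat) \<Rightarrow> (nat \<Rightarrow> bool) \<Rightarrow> nat \<Rightarrow> nat \<Rightarrow> nat" where
  "indicator_tuple h t x = (\<lambda>i\<in>{1..h}. if x i then t else id)"

lemma indicator_tuple_in_tuples: "t permutes {1..n} \<Longrightarrow> indicator_tuple h t x \<in> tuples h n"
  unfolding indicator_tuple_def tuples_def by (auto simp: sym_group_carrier permutes_id)

lemma indicator_tuple_inj:
  assumes "t \<noteq> id" "x \<in> {1..h} \<rightarrow>\<^sub>E UNIV" "y \<in> {1..h} \<rightarrow>\<^sub>E UNIV"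
    and "indicator_tuple h t x = indicator_tuple h t y"
  shows "x = y"
proof (rule extensionalityI)
  show "x \<in> extensional {1..h}" "y \<in> extensional {1..h}" using assms(2,3) by (simp_all add: PiE_iff)
next
  fix i assume "i \<in> {1..h}"
  then have "(if x i then t else id) = (if y i then t else id)"
    using fun_cong[OF assms(4), of i] unfolding indicator_tuple_def by simp
  then show "x i = y i" using assms(1) by (auto split: if_splits)
qed

lemma act_indicator_tuple:
  assumes "\<phi> permutes {1..h}"
  shows "act h (indicator_tuple h t x) (\<phi>, id) = indicator_tuple h t (perm_vec h \<phi> x)"
proof -
  have "inv' \<phi> i \<in> {1..h}" if "i \<in> {1..h}" for i
    using that permutes_in_image[OF permutes_inv[OF assms]] by simp
  then show ?thesis
    unfolding act_def indicator_tuple_def perm_vec_def by (auto intro!: ext)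
qed

lemma act_const_tuple:
  assumes "\<phi> permutes {1..h}"
  shows "act h (\<lambda>i\<in>{1..h}. \<tau>) (\<phi>, \<psi>) = (\<lambda>i\<in>{1..h}. \<psi> \<circ> \<tau>)"
proof -
  have "inv' \<phi> i \<in> {1..h}" if "i \<in> {1..h}" for i
    using that permutes_in_image[OF permutes_inv[OF assms]] by simp
  then show ?thesis unfolding act_def by (auto intro!: ext)
qed

lemma snd_eq_id_if_act_const_tuple_eq:
  assumes "h \<ge> 1" "\<phi> permutes {1..h}" "\<sigma> permutes {1..h}"
    and eq: "act h (\<lambda>i\<in>{1..h}. id) (\<phi>, \<psi>) = act h (\<lambda>i\<in>{1..h}. id) (\<sigma>, id)"
  shows "\<psi> = id"
proof -
  have "(\<lambda>i\<in>{1..h}. \<psi> \<circ> id) = act h (\<lambda>i\<in>{1..h}. id) (\<phi>, \<psi>)"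
    by (rule act_const_tuple[OF assms(2), symmetric])
  also have "\<dots> = act h (\<lambda>i\<in>{1..h}. id) (\<sigma>, id)" by (rule eq)
  also have "\<dots> = (\<lambda>i\<in>{1..h}. id \<circ> id)" by (rule act_const_tuple[OF assms(3)])
  finally have "(\<lambda>i\<in>{1..h}. \<psi> \<circ> id) 1 = (\<lambda>i\<in>{1..h}. id \<circ> id) 1" by (rule fun_cong)
  then show ?thesis using assms(1) by simp
qed

lemma perm_vec_eq_if_act_indicator_tuple_eq:
  assumes "t \<noteq> id" "\<phi> permutes {1..h}" "\<sigma> permutes {1..h}"
    and "act h (indicator_tuple h t x) (\<phi>, id) = act h (indicator_tuple h t x) (\<sigma>, id)"
  shows "perm_vec h \<phi> x = perm_vec h \<sigma> x"
proof (rule indicator_tuple_inj[OF assms(1) perm_vec_in_PiE perm_vec_in_PiE])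
  show "indicator_tuple h t (perm_vec h \<phi> x) = indicator_tuple h t (perm_vec h \<sigma> x)"
    using assms(4) by (simp only: act_indicator_tuple[OF assms(2)] act_indicator_tuple[OF assms(3)])
qed

lemma calA_invariance_group_subset:
  assumes "h \<ge> 1" "n \<ge> 2" and W: "W \<in> calA h n (invariance_group h f \<times> {id})"
  shows "W \<subseteq> invariance_group h f \<times> {id}"
proof safe
  let ?V = "invariance_group h f"
  fix \<phi> \<psi> assume g: "(\<phi>, \<psi>) \<in> W"
  have "W \<subseteq> carrier (bigG h n)" using W subgroup.subset unfolding calA_def by blast
  then have "\<phi> \<in> carrier (sym_group h)" using g unfolding bigG_def DirProd_def by auto
  then have \<phi>p: "\<phi> permutes {1..h}" by (rule sym_group_carrier[THEN iffD1])
  have orbit: "\<exists>\<sigma>\<in>?V. act h p (\<phi>, \<psi>) = act h p (\<sigma>, id)" if "p \<in> tuples h n" for p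
  proof -
    have "act h p (\<phi>, \<psi>) \<in> orbit_under h (?V \<times> {id}) p"
      using W that g unfolding calA_def orbit_under_def by blast
    then show ?thesis unfolding orbit_under_def by blast
  qed
  have "(\<lambda>i\<in>{1..h}. id) \<in> tuples h n"
    unfolding tuples_def by (auto simp: sym_group_carrier permutes_id)
  then show \<psi>_id: "\<psi> = id"
    using orbit snd_eq_id_if_act_const_tuple_eq[OF assms(1) \<phi>p] invariance_group_permutes by blast
  define t where "t = Transposition.transpose (1::nat) 2"
  have t_perm: "t permutes {1..n}" unfolding t_def using assms(2) by (intro permutes_swap_id) auto
  have "t 1 = 2" unfolding t_def by simp
  then have t_nontrivial: "t \<noteq> id" by auto
  show "\<phi> \<in> ?V"
  proof (rule invariance_group_memI[OF \<phi>p])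
    fix x :: "nat \<Rightarrow> bool"
    show "\<exists>\<sigma>\<in>?V. perm_vec h \<phi> x = perm_vec h \<sigma> x"
      using orbit[OF indicator_tuple_in_tuples[OF t_perm]] invariance_group_permutes
        perm_vec_eq_if_act_indicator_tuple_eq[OF t_nontrivial \<phi>p]
      unfolding \<psi>_id by blast
  qed
qed

lemma regular_subset_id: "U \<subseteq> UNIV \<times> {id} \<Longrightarrow> regular h n U"
  unfolding regular_def by auto

lemma calO_eq_self:
  assumes "subgroup U (bigG h n)" "regular h n U" "\<And>W. W \<in> calA h n U \<Longrightarrow> W \<subseteq> U"
  shows "calO h n U = U"
proof -
  have "U \<in> calA h n U" unfolding calA_def using assms(1,2) by blast
  then have U: "\<Union> (calA h n U) = U" using assms(3) by blast
  have G: "group (bigG h n)" unfolding bigG_def by (intro DirProd_group sym_group_is_group)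
  show ?thesis unfolding calO_def U
  proof (rule subset_antisym)
    show "generate (bigG h n) U \<subseteq> U"
      by (rule group.generate_subgroup_incl[OF G subset_refl assms(1)])
    show "U \<subseteq> generate (bigG h n) U" by (blast intro: generate.incl)
  qed
qed

theorem mainTheorem17:
  fixes h n :: nat and V :: "(nat \<Rightarrow> nat) set" and f :: "(nat \<Rightarrow> bool) \<Rightarrow> bool"
  assumes "h \<ge> 2" and "n \<ge> 2"
    and "V = invariance_group h f"
  shows "calO h n (V \<times> {id}) = V \<times> {id}"
proof (rule calO_eq_self)
  show "subgroup (V \<times> {id}) (bigG h n)"
    using DirProd_subgroups[OF sym_group_is_group subgroup_invariance_group sym_group_is_group
        group.triv_subgroup[OF sym_group_is_group]]
    unfolding bigG_def assms(3) by (simp add: sym_group_one)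
  show "regular h n (V \<times> {id})" by (rule regular_subset_id) blast
  show "W \<subseteq> V \<times> {id}" if "W \<in> calA h n (V \<times> {id})" for W
    using calA_invariance_group_subset[of h n W f] assms that by simp
qed

end
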